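(* With probability at least $1-\delta$ over the random initialization, $\|\mathbf{w}_r(t)-\mathbf{w}_r(0)\|_2=\mathcal{O}\!\left(\frac{n}{\sqrt{\delta m}\,\lambda}\right)$ for all $t\ge0$ and all $r\in[m]$.
   Context: Training data $\{(\mathbf{x}_i,y_i)\}_{i=1}^n$ with $\|\mathbf{x}_i\|_2=1$, $|y_i|\le1$. The network is $f_{nn}(\mathbf{x};\mathbf{W})=\frac{1}{\sqrt m}\sum_{r=1}^m a_r\sigma(\mathbf{w}_r^\top\mathbf{x})$, $\sigma(z)=\max(z,0)$, $\mathbf{W}=[\mathbf{w}_1,\dots,\mathbf{w}_m]$, initialized with $\mathbf{w}_r(0)\sim\mathcal{N}(\mathbf{0},\kappa^2\mathbf{I}_d)$, $a_r\sim\mathrm{unif}(\{-1,1\})$, all independent, $0<\kappa$. The vector $\mathbf{a}$ is fixed and $\mathbf{W}(t)$ evolves by the gradient flow $\frac{d\mathbf{W}(t)}{dt}=-\frac{\partial\mathcal{L}(\mathbf{W}(t))}{\partial\mathbf{W}(t)}$ on $\mathcal{L}(\mathbf{W})=\frac12\sum_{i=1}^n(f_{nn}(\mathbf{x}_i;\mathbf{W})-y_i)^2+\frac\lambda2\|\mathbf{W}-\mathbf{W}(0)\|_F^2$, $\lambda>0$, using $\sigma'(z)=\mathbb{I}\{z\ge0\}$. *)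

theory Defs
  imports "HOL-Probability.Probability"
begin

text \<open>Vectors in R^d are represented as functions nat => real; only coordinates j < d matter.
  The weight matrix W is a function r => (j => real); only r < m matters.\<close>

definition inner_d :: "nat \<Rightarrow> (nat \<Rightarrow> real) \<Rightarrow> (nat \<Rightarrow> real) \<Rightarrow> real" where
  "inner_d d u v = (\<Sum>j<d. u j * v j)"

definition norm_d :: "nat \<Rightarrow> (nat \<Rightarrow> real) \<Rightarrow> real" where
  "norm_d d u = sqrt (\<Sum>j<d. (u j)\<^sup>2)"

definition relu :: "real \<Rightarrow> real" where
  "relu z = max z 0"

definition relu' :: "real \<Rightarrow> real" where
  "relu' z = (if z \<ge> 0 then 1 else 0)"

definition f_nn :: "nat \<Rightarrow> nat \<Rightarrow> (nat \<Rightarrow> real) \<Rightarrow> (nat \<Rightarrow> nat \<Rightarrow> real) \<Rightarrow> (nat \<Rightarrow> real) \<Rightarrow> real" where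
  "f_nn m d a W xv = (1 / sqrt (real m)) * (\<Sum>r<m. a r * relu (inner_d d (W r) xv))"

definition loss :: "nat \<Rightarrow> nat \<Rightarrow> nat \<Rightarrow> (nat \<Rightarrow> nat \<Rightarrow> real) \<Rightarrow> (nat \<Rightarrow> real) \<Rightarrow> (nat \<Rightarrow> real)
    \<Rightarrow> real \<Rightarrow> (nat \<Rightarrow> nat \<Rightarrow> real) \<Rightarrow> (nat \<Rightarrow> nat \<Rightarrow> real) \<Rightarrow> real" where
  "loss n m d x y a lam W0 W =
     (1/2) * (\<Sum>i<n. (f_nn m d a W (x i) - y i)\<^sup>2)
     + (lam/2) * (\<Sum>r<m. \<Sum>j<d. (W r j - W0 r j)\<^sup>2)"

definition grad_L :: "nat \<Rightarrow> nat \<Rightarrow> nat \<Rightarrow> (nat \<Rightarrow> nat \<Rightarrow> real) \<Rightarrow> (nat \<Rightarrow> real) \<Rightarrow> (nat \<Rightarrow> real)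
    \<Rightarrow> real \<Rightarrow> (nat \<Rightarrow> nat \<Rightarrow> real) \<Rightarrow> (nat \<Rightarrow> nat \<Rightarrow> real) \<Rightarrow> nat \<Rightarrow> nat \<Rightarrow> real" where
  "grad_L n m d x y a lam W0 W r j =
     (\<Sum>i<n. (f_nn m d a W (x i) - y i) * (1 / sqrt (real m)) * a r
              * relu' (inner_d d (W r) (x i)) * x i j)
     + lam * (W r j - W0 r j)"

definition grad_flow :: "nat \<Rightarrow> nat \<Rightarrow> nat \<Rightarrow> (nat \<Rightarrow> nat \<Rightarrow> real) \<Rightarrow> (nat \<Rightarrow> real) \<Rightarrow> (nat \<Rightarrow> real)
    \<Rightarrow> real \<Rightarrow> (nat \<Rightarrow> nat \<Rightarrow> real) \<Rightarrow> (real \<Rightarrow> nat \<Rightarrow> nat \<Rightarrow> real) \<Rightarrow> bool" where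
  "grad_flow n m d x y a lam W0 W \<longleftrightarrow>
     (\<forall>r<m. \<forall>j<d. W 0 r j = W0 r j) \<and>
     (\<forall>t\<ge>0. \<forall>r<m. \<forall>j<d.
        ((\<lambda>s. W s r j) has_real_derivative (- grad_L n m d x y a lam W0 (W t) r j)) (at t within {0..}))"

text \<open>Initialization: w_r(0) ~ N(0, kappa^2 I_d) (i.i.d. coordinates), a_r ~ unif{-1,1}, all independent.
  An outcome is a pair (w0, a).\<close>
definition init_measure :: "nat \<Rightarrow> nat \<Rightarrow> real \<Rightarrow> ((nat \<Rightarrow> nat \<Rightarrow> real) \<times> (nat \<Rightarrow> real)) measure" where
  "init_measure d m \<kappa> =
     (PiM {..<m} (\<lambda>_. PiM {..<d} (\<lambda>_. density lborel (normal_density 0 \<kappa>))))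
     \<Otimes>\<^sub>M (PiM {..<m} (\<lambda>_. measure_pmf (pmf_of_set {-1, 1::real})))"

end

theory Submission
  imports Defs
begin

text \<open>Along the gradient flow the regularised loss never increases: the ReLU kinks are crossed
  with nonzero speed only at countably many times, and a continuous function whose derivative is
  nonpositive off a countable set is nonincreasing. Hence the data part of the gradient of
  \<open>w\<^sub>r\<close> stays bounded by \<open>\<surd>n \<surd>(2 L(0)) / \<surd>m\<close>, while the regulariser pulls
  \<open>w\<^sub>r\<close> back to \<open>w\<^sub>r(0)\<close> at rate \<open>\<lambda>\<close>; a Gronwall argument then bounds
  \<open>\<parallel>w\<^sub>r(t) - w\<^sub>r(0)\<parallel>\<close> by that quantity divided by \<open>\<lambda>\<close>. Finally, averaging over the
  random signs and Gaussian weights gives \<open>E \<Sum>\<^sub>i f(x\<^sub>i)\<^sup>2 \<le> n \<kappa>\<^sup>2\<close>, so by Markov's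
  inequality \<open>2 L(0) \<le> 4n/\<delta>\<close> with probability at least \<open>1 - \<delta>\<close>.\<close>

section \<open>One-variable calculus\<close>

lemma last_crossing:
  fixes g :: "real \<Rightarrow> real"
  assumes "a \<le> b" and cont: "continuous_on {a..b} g" and y: "g a < y" "y < g b"
  defines "\<tau> \<equiv> Sup {t \<in> {a..b}. g t = y}"
  shows "\<tau> \<in> {a<..<b}" and "g \<tau> = y" and "\<And>s. \<tau> < s \<Longrightarrow> s \<le> b \<Longrightarrow> y < g s"
proof -
  let ?Z = "{t \<in> {a..b}. g t = y}"
  obtain t0 where "a \<le> t0" "t0 \<le> b" "g t0 = y"
    using IVT'[of g a y b] y cont \<open>a \<le> b\<close> by auto
  hence ne: "?Z \<noteq> {}" by auto
  have bdd: "bdd_above ?Z" by (auto simp: bdd_above_def)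
  have "closed ?Z" by (rule continuous_closed_preimage_constant[OF cont]) simp
  hence "\<tau> \<in> ?Z" unfolding \<tau>_def using closed_contains_Sup[OF ne bdd] by blast
  hence \<tau>: "a \<le> \<tau>" "\<tau> \<le> b" "g \<tau> = y" by auto
  show after: "y < g s" if s: "\<tau> < s" "s \<le> b" for s
  proof (rule ccontr)
    assume "\<not> y < g s"
    moreover have "continuous_on {s..b} g" using \<tau> s
      by (intro continuous_on_subset[OF cont]) auto
    ultimately obtain t' where t': "s \<le> t'" "t' \<le> b" "g t' = y"
      using IVT'[of g s y b] s y by auto
    hence "t' \<le> \<tau>" unfolding \<tau>_def using bdd \<tau> s by (intro cSup_upper) auto
    thus False using t' s by simp
  qed
  show "g \<tau> = y" by (fact \<tau>(3))
  have "\<tau> \<noteq> a" "\<tau> \<noteq> b" using \<tau> y by auto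
  thus "\<tau> \<in> {a<..<b}" using \<tau> by auto
qed

lemma DERIV_nonneg_if_increasing_to_the_right:
  fixes g :: "real \<Rightarrow> real"
  assumes "(g has_real_derivative D) (at t)" "t < b" "\<And>s. t < s \<Longrightarrow> s \<le> b \<Longrightarrow> g t < g s"
  shows "0 \<le> D"
proof (rule tendsto_lowerbound)
  have "((\<lambda>s. (g s - g t) / (s - t)) \<longlongrightarrow> D) (at t)"
    using assms(1) by (simp add: has_field_derivative_iff)
  thus "((\<lambda>s. (g s - g t) / (s - t)) \<longlongrightarrow> D) (at_right t)"
    by (rule filterlim_mono) (auto simp: at_le)
  have "eventually (\<lambda>s. t < s \<and> s < b) (at_right t)"
    using assms(2) by (auto simp: eventually_at_right_field intro!: exI[of _ b])
  thus "eventually (\<lambda>s. 0 \<le> (g s - g t) / (s - t)) (at_right t)"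
  proof eventually_elim
    case (elim s)
    thus ?case using assms(3)[of s] by simp
  qed
qed simp

lemma DERIV_nonpos_imp_decreasing_countable:
  fixes f :: "real \<Rightarrow> real"
  assumes "a \<le> b" and cont: "continuous_on {a..b} f" and S: "countable S"
    and der: "\<And>t. t \<in> {a<..<b} - S \<Longrightarrow> \<exists>D. (f has_real_derivative D) (at t) \<and> D \<le> 0"
  shows "f b \<le> f a"
proof (rule ccontr)
  assume "\<not> f b \<le> f a"
  hence fab: "f a < f b" by simp
  with \<open>a \<le> b\<close> have "a < b" by (cases "a = b") auto
  \<comment> \<open>Tilt \<open>f\<close> to \<open>g\<close>, which still increases but has negative derivative off \<open>S\<close>.
    The last crossing time of a level \<open>y \<in> (g a, g b)\<close> is injective in \<open>y\<close>, so for some \<open>y\<close>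
    it avoids the countable set \<open>S\<close>.\<close>
  define \<eta> where "\<eta> = (f b - f a) / (2 * (b - a))"
  have "\<eta> > 0" using fab \<open>a < b\<close> by (simp add: \<eta>_def)
  define g where "g t = f t - \<eta> * (t - a)" for t
  have g_cont: "continuous_on {a..b} g" unfolding g_def by (intro continuous_intros cont)
  have "g b - g a = (f b - f a) / 2" using \<open>a < b\<close> by (simp add: g_def \<eta>_def field_simps)
  hence "g a < g b" using fab by simp
  define \<tau> where "\<tau> y = Sup {t \<in> {a..b}. g t = y}" for y
  note crossing = last_crossing[OF \<open>a \<le> b\<close> g_cont, folded \<tau>_def]
  have "inj_on \<tau> {g a<..<g b}"
    by (rule inj_onI) (metis crossing(2) greaterThanLessThan_iff)
  moreover have "uncountable {g a<..<g b}" using \<open>g a < g b\<close> uncountable_open_interval by blast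
  ultimately have "\<not> \<tau> ` {g a<..<g b} \<subseteq> S"
    using S countable_subset countable_image_inj_on by blast
  then obtain y where "y \<in> {g a<..<g b}" and "\<tau> y \<notin> S" by blast
  hence y: "g a < y" "y < g b" by auto
  then obtain D where D: "(f has_real_derivative D) (at (\<tau> y))" "D \<le> 0"
    using der[of "\<tau> y"] crossing(1)[OF y] \<open>\<tau> y \<notin> S\<close> by auto
  have "(g has_real_derivative (D - \<eta>)) (at (\<tau> y))"
    unfolding g_def by (auto intro!: derivative_eq_intros D(1))
  moreover have "\<tau> y < b" using crossing(1)[OF y] by simp
  ultimately have "0 \<le> D - \<eta>"
    by (rule DERIV_nonneg_if_increasing_to_the_right) (use crossing(2,3)[OF y] in auto)
  thus False using D(2) \<open>\<eta> > 0\<close> by simp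
qed

lemma countable_if_all_isolated:
  fixes X :: "'a::{metric_space, second_countable_topology} set"
  assumes "\<And>x. x \<in> X \<Longrightarrow> x isolated_in X"
  shows "countable X"
proof -
  obtain e where e: "\<And>x. x \<in> X \<Longrightarrow> e x > 0 \<and> (\<forall>y\<in>X. dist x y < e x \<longrightarrow> y = x)"
    using assms unfolding isolated_in_dist_Ex_iff by metis
  define B where "B x = ball x (e x / 2)" for x
  have B_eq: "x = y" if "x \<in> X" "y \<in> X" "z \<in> B x" "z \<in> B y" for x y z
  proof -
    have "dist x y < e x / 2 + e y / 2"
      using that dist_triangle3[of x y z] by (simp add: B_def dist_commute)
    hence "dist x y < max (e x) (e y)" by linarith
    thus ?thesis using e[OF that(1)] e[OF that(2)] that(1,2) by (auto simp: dist_commute max_def split: if_splits)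
  qed
  have "pairwise disjnt (B ` X)"
    by (auto simp: pairwise_def disjnt_def dest: B_eq)
  hence "countable (B ` X)" by (rule countable_disjoint_open_subsets[rotated]) (auto simp: B_def)
  moreover have "inj_on B X"
    by (rule inj_onI) (metis B_eq B_def centre_in_ball e half_gt_zero)
  ultimately show ?thesis using countable_image_inj_on by blast
qed

lemma DERIV_nonzero_imp_isolated_in_level_set:
  assumes "(z has_real_derivative c) (at t)" and "c \<noteq> 0"
  shows "t isolated_in {s. z s = z t}"
proof -
  have "((\<lambda>s. (z s - z t) / (s - t)) \<longlongrightarrow> c) (at t)"
    using assms(1) by (simp add: has_field_derivative_iff)
  hence "eventually (\<lambda>s. (z s - z t) / (s - t) \<noteq> 0) (at t)"
    using assms(2) by (rule tendsto_imp_eventually_ne)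
  then obtain e where "e > 0" "\<forall>s. s \<noteq> t \<and> dist s t < e \<longrightarrow> z s \<noteq> z t"
    by (auto simp: eventually_at)
  thus ?thesis by (auto simp: isolated_in_dist_Ex_iff dist_commute)
qed

lemma DERIV_relu_compose:
  assumes z: "(z has_real_derivative c) (at t)" and "z t \<noteq> 0 \<or> c = 0"
  shows "((\<lambda>s. relu (z s)) has_real_derivative relu' (z t) * c) (at t)"
proof -
  have lim: "(z \<longlongrightarrow> z t) (at t)" using DERIV_isCont[OF z] by (simp add: isCont_def)
  consider "z t > 0" | "z t < 0" | "z t = 0" "c = 0" using assms(2) by linarith
  then show ?thesis
  proof cases
    case 1
    have "eventually (\<lambda>s. z s > 0) (at t)" using order_tendstoD(1)[OF lim 1] .
    hence "eventually (\<lambda>s. relu (z s) = z s) (nhds t)"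
      using 1 by (auto simp: eventually_nhds_conv_at relu_def elim!: eventually_mono)
    moreover have "(z has_real_derivative relu' (z t) * c) (at t)" using z 1 by (simp add: relu'_def)
    ultimately show ?thesis by (subst DERIV_cong_ev[OF refl _ refl])
  next
    case 2
    have "eventually (\<lambda>s. z s < 0) (at t)" using order_tendstoD(2)[OF lim 2] .
    hence "eventually (\<lambda>s. relu (z s) = 0) (nhds t)"
      using 2 by (auto simp: eventually_nhds_conv_at relu_def elim!: eventually_mono)
    moreover have "((\<lambda>s. 0) has_real_derivative relu' (z t) * c) (at t)" using 2 by (simp add: relu'_def)
    ultimately show ?thesis by (subst DERIV_cong_ev[OF refl _ refl])
  next
    case 3
    \<comment> \<open>At a kink crossed with zero speed, \<open>relu (z s)\<close> is squeezed by \<open>\<bar>z s - z t\<bar>\<close>.\<close>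
    have q: "((\<lambda>s. (z s - z t) / (s - t)) \<longlongrightarrow> 0) (at t)"
      using z 3 by (simp add: has_field_derivative_iff)
    have "((\<lambda>s. (relu (z s) - relu (z t)) / (s - t)) \<longlongrightarrow> 0) (at t)"
    proof (rule Lim_null_comparison)
      show "eventually (\<lambda>s. norm ((relu (z s) - relu (z t)) / (s - t)) \<le> \<bar>(z s - z t) / (s - t)\<bar>) (at t)"
        using 3 by (auto simp: relu_def abs_div intro!: always_eventually divide_right_mono)
      show "((\<lambda>s. \<bar>(z s - z t) / (s - t)\<bar>) \<longlongrightarrow> 0) (at t)"
        using tendsto_rabs[OF q] by simp
    qed
    thus ?thesis using 3 by (simp add: has_field_derivative_iff)
  qed
qed

lemma norm_d_nonneg: "0 \<le> norm_d d u"
  by (simp add: norm_d_def sum_nonneg)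

lemma abs_inner_d_le_norm_d: "\<bar>inner_d d u v\<bar> \<le> norm_d d u * norm_d d v"
proof -
  have "\<bar>inner_d d u v\<bar> \<le> (\<Sum>j<d. \<bar>u j\<bar> * \<bar>v j\<bar>)"
    unfolding inner_d_def abs_mult[symmetric] by (rule sum_abs)
  also have "\<dots> \<le> L2_set u {..<d} * L2_set v {..<d}" by (rule L2_set_mult_ineq)
  finally show ?thesis by (simp add: norm_d_def L2_set_def)
qed

lemma sum_abs_le_sqrt_card_mult:
  fixes e :: "nat \<Rightarrow> real"
  shows "(\<Sum>i<n. \<bar>e i\<bar>) \<le> sqrt (real n) * sqrt (\<Sum>i<n. (e i)\<^sup>2)"
proof -
  have "(\<Sum>i<n. \<bar>e i\<bar>) = (\<Sum>i<n. \<bar>1::real\<bar> * \<bar>e i\<bar>)" by simp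
  also have "\<dots> \<le> L2_set (\<lambda>_. 1) {..<n} * L2_set e {..<n}" by (rule L2_set_mult_ineq)
  finally show ?thesis by (simp add: L2_set_def)
qed

lemma damped_growth_bound:
  fixes S :: "real \<Rightarrow> real"
  assumes "0 \<le> T" "0 < lam" "0 \<le> K" "continuous_on {0..T} S" "S 0 = 0"
    and der: "\<And>t. t \<in> {0<..<T} \<Longrightarrow> \<exists>D. (S has_real_derivative D) (at t) \<and> D \<le> K - lam * S t"
  shows "S T \<le> K / lam"
proof -
  define \<psi> where "\<psi> t = exp (lam * t) * (S t - K / lam)" for t
  have "\<psi> T \<le> \<psi> 0"
  proof (rule DERIV_nonpos_imp_decreasing_countable[OF \<open>0 \<le> T\<close> _ countable_empty])
    show "continuous_on {0..T} \<psi>" unfolding \<psi>_def by (intro continuous_intros assms)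
    fix t assume "t \<in> {0<..<T} - {}"
    then obtain D where D: "(S has_real_derivative D) (at t)" "D \<le> K - lam * S t"
      using der by auto
    have "(\<psi> has_real_derivative exp (lam * t) * (D + lam * S t - K)) (at t)"
      unfolding \<psi>_def[abs_def] using \<open>0 < lam\<close>
      by (auto intro!: derivative_eq_intros D(1) simp: field_simps)
    moreover have "exp (lam * t) * (D + lam * S t - K) \<le> 0"
      using D(2) by (simp add: mult_nonneg_nonpos)
    ultimately show "\<exists>D. (\<psi> has_real_derivative D) (at t) \<and> D \<le> 0" by blast
  qed
  also have "\<psi> 0 \<le> 0" using assms by (simp add: \<psi>_def)
  finally show ?thesis by (simp add: \<psi>_def mult_le_0_iff)
qed

lemma damped_flow_norm_bound:
  fixes u g :: "real \<Rightarrow> nat \<Rightarrow> real"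
  assumes "0 \<le> T" "0 < lam" "0 \<le> G"
    and init: "\<And>j. j < d \<Longrightarrow> u 0 j = 0"
    and cont: "\<And>j. j < d \<Longrightarrow> continuous_on {0..T} (\<lambda>t. u t j)"
    and der: "\<And>t j. t \<in> {0<..<T} \<Longrightarrow> j < d \<Longrightarrow>
                ((\<lambda>s. u s j) has_real_derivative - g t j - lam * u t j) (at t)"
    and bound: "\<And>t. t \<in> {0<..<T} \<Longrightarrow> \<bar>inner_d d (u T) (g t)\<bar> \<le> norm_d d (u T) * G"
  shows "norm_d d (u T) \<le> G / lam"
proof -
  define N where "N = norm_d d (u T)"
  define S where "S t = inner_d d (u T) (u t)" for t
  \<comment> \<open>Project the flow onto its own endpoint and apply the scalar bound.\<close>
  have "S T \<le> N * G / lam"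
  proof (rule damped_growth_bound[OF \<open>0 \<le> T\<close> \<open>0 < lam\<close>])
    show "0 \<le> N * G" using \<open>0 \<le> G\<close> by (simp add: N_def norm_d_nonneg)
    show "continuous_on {0..T} S" unfolding S_def inner_d_def by (intro continuous_intros cont) auto
    show "S 0 = 0" by (simp add: S_def inner_d_def init)
    fix t assume t: "t \<in> {0<..<T}"
    have "(S has_real_derivative (\<Sum>j<d. u T j * (- g t j - lam * u t j))) (at t)"
      unfolding S_def[abs_def] inner_d_def by (intro DERIV_sum DERIV_cmult der t) simp
    moreover have "(\<Sum>j<d. u T j * (- g t j - lam * u t j)) = - inner_d d (u T) (g t) - lam * S t"
      by (simp add: S_def inner_d_def algebra_simps sum_subtractf sum_distrib_left sum_negf)
    moreover have "- inner_d d (u T) (g t) \<le> N * G" using bound[OF t] by (simp add: N_def)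
    ultimately show "\<exists>D. (S has_real_derivative D) (at t) \<and> D \<le> N * G - lam * S t" by force
  qed
  moreover have "S T = N * N"
    by (simp add: S_def N_def norm_d_def inner_d_def sum_nonneg flip: power2_eq_square)
  ultimately have NN: "N * N \<le> N * (G / lam)" by (metis times_divide_eq_right)
  have "0 \<le> N" by (simp add: N_def norm_d_nonneg)
  have "N \<le> G / lam"
  proof (cases "N = 0")
    case False
    with \<open>0 \<le> N\<close> have "0 < N" by simp
    with NN show ?thesis by (metis mult_le_cancel_left_pos)
  qed (use \<open>0 < lam\<close> \<open>0 \<le> G\<close> in simp)
  thus ?thesis by (simp add: N_def)
qed

lemma sum_square_diff_le:
  fixes f y :: "nat \<Rightarrow> real"
  assumes "\<And>i. i < n \<Longrightarrow> \<bar>y i\<bar> \<le> 1" "(\<Sum>i<n. (f i)\<^sup>2) < real n / \<delta>" "0 < \<delta>" "\<delta> \<le> 1"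
  shows "(\<Sum>i<n. (f i - y i)\<^sup>2) \<le> 4 * real n / \<delta>"
proof -
  have "(\<Sum>i<n. (f i - y i)\<^sup>2) \<le> (\<Sum>i<n. 2 * (f i)\<^sup>2 + 2)"
  proof (rule sum_mono)
    fix i assume "i \<in> {..<n}"
    hence "(y i)\<^sup>2 \<le> 1" using assms(1) by (simp add: abs_square_le_1)
    moreover have "0 \<le> (f i + y i)\<^sup>2" by simp
    ultimately show "(f i - y i)\<^sup>2 \<le> 2 * (f i)\<^sup>2 + 2"
      unfolding power2_diff power2_sum by linarith
  qed
  also have "\<dots> = 2 * (\<Sum>i<n. (f i)\<^sup>2) + 2 * real n"
    by (simp add: sum.distrib sum_distrib_left)
  also have "\<dots> \<le> 4 * real n / \<delta>"
    using assms(2-4) mult_left_mono[of \<delta> 1 "real n"] by (simp add: field_simps)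
  finally show ?thesis .
qed

section \<open>The regularised gradient flow\<close>

locale relu_gradient_flow =
  fixes n m d :: nat and x :: "nat \<Rightarrow> nat \<Rightarrow> real" and y a :: "nat \<Rightarrow> real"
    and lam :: real and W0 :: "nat \<Rightarrow> nat \<Rightarrow> real" and W :: "real \<Rightarrow> nat \<Rightarrow> nat \<Rightarrow> real"
  assumes flow: "grad_flow n m d x y a lam W0 W" and lam_pos: "0 < lam"
begin

definition grad :: "real \<Rightarrow> nat \<Rightarrow> nat \<Rightarrow> real" where
  "grad t r j = grad_L n m d x y a lam W0 (W t) r j"

definition preact :: "nat \<Rightarrow> nat \<Rightarrow> real \<Rightarrow> real" where
  "preact r i t = inner_d d (W t r) (x i)"

definition preact_deriv :: "nat \<Rightarrow> nat \<Rightarrow> real \<Rightarrow> real" where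
  "preact_deriv r i t = (\<Sum>j<d. - grad t r j * x i j)"

definition residual :: "nat \<Rightarrow> real \<Rightarrow> real" where
  "residual i t = f_nn m d a (W t) (x i) - y i"

definition data_grad :: "real \<Rightarrow> nat \<Rightarrow> nat \<Rightarrow> real" where
  "data_grad t r j =
     (\<Sum>i<n. residual i t * (1 / sqrt (real m)) * a r * relu' (preact r i t) * x i j)"

abbreviation trajectory_loss :: "real \<Rightarrow> real" where
  "trajectory_loss t \<equiv> loss n m d x y a lam W0 (W t)"

text \<open>Off this set the loss is differentiable along the flow, by \<open>DERIV_relu_compose\<close>.\<close>
definition kinks :: "real set" where
  "kinks = (\<Union>r<m. \<Union>i<n. {t. 0 < t \<and> preact r i t = 0 \<and> preact_deriv r i t \<noteq> 0})"

lemma W_initial: "r < m \<Longrightarrow> j < d \<Longrightarrow> W 0 r j = W0 r j"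
  using flow by (simp add: grad_flow_def)

lemma W_has_derivative_within:
  "0 \<le> t \<Longrightarrow> r < m \<Longrightarrow> j < d \<Longrightarrow>
     ((\<lambda>s. W s r j) has_real_derivative - grad t r j) (at t within {0..})"
  using flow by (simp add: grad_flow_def grad_def)

lemma W_has_derivative:
  assumes "0 < t" "r < m" "j < d"
  shows "((\<lambda>s. W s r j) has_real_derivative - grad t r j) (at t)"
proof -
  have "at t within {0..} = at t" using \<open>0 < t\<close> by (intro at_within_interior) simp
  thus ?thesis using W_has_derivative_within[of t r j] assms by simp
qed

lemma W_continuous_on: "r < m \<Longrightarrow> j < d \<Longrightarrow> continuous_on {0..T} (\<lambda>s. W s r j)"
  by (rule continuous_on_subset[OF DERIV_continuous_on[OF W_has_derivative_within]]) auto

lemma displacement_has_derivative: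
  "0 < t \<Longrightarrow> r < m \<Longrightarrow> j < d \<Longrightarrow>
     ((\<lambda>s. W s r j - W0 r j) has_real_derivative - grad t r j) (at t)"
  using DERIV_diff[OF W_has_derivative DERIV_const] by simp

lemma preact_has_derivative:
  "0 < t \<Longrightarrow> r < m \<Longrightarrow> (preact r i has_real_derivative preact_deriv r i t) (at t)"
  unfolding preact_def[abs_def] preact_deriv_def inner_d_def
  by (intro DERIV_sum DERIV_cmult_right W_has_derivative) auto

lemma countable_kinks: "countable kinks"
  unfolding kinks_def
proof (intro countable_UN[OF countable_finite] finite_lessThan ballI countable_if_all_isolated)
  fix r i t
  assume ri: "r \<in> {..<m}" "i \<in> {..<n}"
    and t: "t \<in> {t. 0 < t \<and> preact r i t = 0 \<and> preact_deriv r i t \<noteq> 0}"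
  have "t isolated_in {s. preact r i s = preact r i t}"
    using t ri by (intro DERIV_nonzero_imp_isolated_in_level_set[OF preact_has_derivative]) auto
  thus "t isolated_in {t. 0 < t \<and> preact r i t = 0 \<and> preact_deriv r i t \<noteq> 0}"
    by (rule isolated_in_subset) (use t in auto)
qed

lemma residual_has_derivative:
  assumes "0 < t" "t \<notin> kinks" "i < n"
  shows "(residual i has_real_derivative
           (1 / sqrt (real m)) * (\<Sum>r<m. a r * (relu' (preact r i t) * preact_deriv r i t))) (at t)"
proof -
  have "((\<lambda>s. relu (preact r i s)) has_real_derivative relu' (preact r i t) * preact_deriv r i t) (at t)"
    if "r < m" for r
    using that assms by (intro DERIV_relu_compose preact_has_derivative) (auto simp: kinks_def)
  hence "((\<lambda>s. (1 / sqrt (real m)) * (\<Sum>r<m. a r * relu (preact r i s)) - y i) has_real_derivative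
           (1 / sqrt (real m)) * (\<Sum>r<m. a r * (relu' (preact r i t) * preact_deriv r i t)) - 0) (at t)"
    by (intro DERIV_diff DERIV_cmult DERIV_sum DERIV_const) auto
  moreover have "residual i = (\<lambda>s. (1 / sqrt (real m)) * (\<Sum>r<m. a r * relu (preact r i s)) - y i)"
    by (auto simp: residual_def f_nn_def preact_def)
  ultimately show ?thesis by simp
qed

lemma grad_eq: "grad t r j = data_grad t r j + lam * (W t r j - W0 r j)"
  by (simp add: grad_def grad_L_def data_grad_def residual_def preact_def)

lemma residual_derivative_inner:
  "(\<Sum>i<n. residual i t * ((1 / sqrt (real m)) * (\<Sum>r<m. a r * (relu' (preact r i t) * preact_deriv r i t))))
     = - (\<Sum>r<m. \<Sum>j<d. grad t r j * data_grad t r j)"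
proof -
  have "(\<Sum>i<n. residual i t * ((1 / sqrt (real m)) * (\<Sum>r<m. a r * (relu' (preact r i t) * preact_deriv r i t))))
      = (\<Sum>i<n. \<Sum>r<m. \<Sum>j<d. - grad t r j *
           (residual i t * (1 / sqrt (real m)) * a r * relu' (preact r i t) * x i j))"
    by (simp add: preact_deriv_def sum_distrib_left mult_ac)
  also have "\<dots> = (\<Sum>r<m. \<Sum>j<d. \<Sum>i<n. - grad t r j *
           (residual i t * (1 / sqrt (real m)) * a r * relu' (preact r i t) * x i j))"
    by (subst sum.swap) (simp add: sum.swap[where A = "{..<n}"])
  also have "\<dots> = - (\<Sum>r<m. \<Sum>j<d. grad t r j * data_grad t r j)"
    by (simp add: data_grad_def sum_distrib_left sum_negf)
  finally show ?thesis .
qed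

lemma loss_has_derivative:
  assumes "0 < t" "t \<notin> kinks"
  shows "(trajectory_loss has_real_derivative - (\<Sum>r<m. \<Sum>j<d. (grad t r j)\<^sup>2)) (at t)"
proof -
  define \<rho> where "\<rho> i = (1 / sqrt (real m)) * (\<Sum>r<m. a r * (relu' (preact r i t) * preact_deriv r i t))"
    for i
  have "((\<lambda>s. (residual i s)\<^sup>2) has_real_derivative 2 * (residual i t * \<rho> i)) (at t)" if "i < n" for i
    using DERIV_power[OF residual_has_derivative[OF assms that], of 2] by (simp add: \<rho>_def mult_ac)
  moreover have "((\<lambda>s. (W s r j - W0 r j)\<^sup>2) has_real_derivative
                   2 * ((W t r j - W0 r j) * - grad t r j)) (at t)" if "r < m" "j < d" for r j
    using DERIV_power[OF displacement_has_derivative[OF assms(1) that], of 2] by (simp add: mult_ac)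
  ultimately have "(trajectory_loss has_real_derivative
          (1/2) * (\<Sum>i<n. 2 * (residual i t * \<rho> i))
        + (lam/2) * (\<Sum>r<m. \<Sum>j<d. 2 * ((W t r j - W0 r j) * - grad t r j))) (at t)"
    unfolding loss_def residual_def[symmetric] by (intro DERIV_add DERIV_cmult DERIV_sum) auto
  moreover have "(1/2) * (\<Sum>i<n. 2 * (residual i t * \<rho> i))
      = - (\<Sum>r<m. \<Sum>j<d. grad t r j * data_grad t r j)"
    using residual_derivative_inner[of t] by (simp add: \<rho>_def sum_distrib_left)
  moreover have "(lam/2) * (\<Sum>r<m. \<Sum>j<d. 2 * ((W t r j - W0 r j) * - grad t r j))
      = - (\<Sum>r<m. \<Sum>j<d. grad t r j * (lam * (W t r j - W0 r j)))"
    by (simp add: sum_distrib_left sum_negf[symmetric] algebra_simps)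
  moreover have "(\<Sum>r<m. \<Sum>j<d. (grad t r j)\<^sup>2)
      = (\<Sum>r<m. \<Sum>j<d. grad t r j * data_grad t r j)
        + (\<Sum>r<m. \<Sum>j<d. grad t r j * (lam * (W t r j - W0 r j)))"
  proof -
    have "(grad t r j)\<^sup>2 = grad t r j * data_grad t r j + grad t r j * (lam * (W t r j - W0 r j))"
      for r j by (simp add: power2_eq_square flip: distrib_left grad_eq)
    thus ?thesis by (simp add: sum.distrib)
  qed
  ultimately show ?thesis by (simp only: minus_add_distrib)
qed

lemma loss_nonincreasing:
  assumes "0 \<le> s"
  shows "trajectory_loss s \<le> trajectory_loss 0"
proof (rule DERIV_nonpos_imp_decreasing_countable[OF assms _ countable_kinks])
  show "continuous_on {0..s} trajectory_loss"
    unfolding loss_def f_nn_def inner_d_def relu_def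
    by (intro continuous_intros) (auto intro: W_continuous_on)
  fix t assume "t \<in> {0<..<s} - kinks"
  thus "\<exists>D. (trajectory_loss has_real_derivative D) (at t) \<and> D \<le> 0"
    by (intro exI[of _ "- (\<Sum>r<m. \<Sum>j<d. (grad t r j)\<^sup>2)"] conjI loss_has_derivative)
      (auto intro!: sum_nonneg)
qed

lemma residual_sum_sq_le_loss: "(\<Sum>i<n. (residual i t)\<^sup>2) \<le> 2 * trajectory_loss t"
  using lam_pos by (simp add: loss_def residual_def sum_nonneg)

lemma initial_loss: "2 * trajectory_loss 0 = (\<Sum>i<n. (f_nn m d a W0 (x i) - y i)\<^sup>2)"
proof -
  have "f_nn m d a (W 0) (x i) = f_nn m d a W0 (x i)" for i
    unfolding f_nn_def inner_d_def by (intro arg_cong2[where f = "(*)"] sum.cong) (auto simp: W_initial)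
  thus ?thesis by (simp add: loss_def W_initial)
qed

lemma abs_inner_data_grad_le:
  assumes "\<bar>a r\<bar> \<le> 1" and unit: "\<And>i. i < n \<Longrightarrow> norm_d d (x i) = 1"
  shows "\<bar>inner_d d v (data_grad t r)\<bar>
           \<le> norm_d d v * (sqrt (real n) * sqrt (2 * trajectory_loss t) / sqrt (real m))"
proof -
  define c where "c i = residual i t * (1 / sqrt (real m)) * a r * relu' (preact r i t)" for i
  have "inner_d d v (data_grad t r) = (\<Sum>i<n. c i * inner_d d v (x i))"
    unfolding inner_d_def data_grad_def c_def
    by (simp add: sum_distrib_left sum_divide_distrib mult_ac sum.swap[where A = "{..<d}"])
  also have "\<bar>\<dots>\<bar> \<le> (\<Sum>i<n. \<bar>residual i t\<bar> / sqrt (real m) * norm_d d v)"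
  proof (rule order_trans[OF sum_abs sum_mono])
    fix i assume "i \<in> {..<n}"
    have "\<bar>c i\<bar> = \<bar>residual i t\<bar> / sqrt (real m) * (\<bar>a r\<bar> * relu' (preact r i t))"
      by (simp add: c_def abs_mult relu'_def)
    also have "\<dots> \<le> \<bar>residual i t\<bar> / sqrt (real m) * 1"
      using assms(1) by (intro mult_left_mono) (auto simp: relu'_def)
    finally have "\<bar>c i\<bar> \<le> \<bar>residual i t\<bar> / sqrt (real m)" by simp
    moreover have "\<bar>inner_d d v (x i)\<bar> \<le> norm_d d v"
      using abs_inner_d_le_norm_d[of d v "x i"] unit \<open>i \<in> {..<n}\<close> by simp
    ultimately show "\<bar>c i * inner_d d v (x i)\<bar> \<le> \<bar>residual i t\<bar> / sqrt (real m) * norm_d d v"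
      unfolding abs_mult by (intro mult_mono) auto
  qed
  also have "\<dots> = norm_d d v / sqrt (real m) * (\<Sum>i<n. \<bar>residual i t\<bar>)"
    by (simp add: sum_distrib_left algebra_simps)
  also have "\<dots> \<le> norm_d d v / sqrt (real m) * (sqrt (real n) * sqrt (2 * trajectory_loss t))"
  proof (rule mult_left_mono)
    have "(\<Sum>i<n. \<bar>residual i t\<bar>) \<le> sqrt (real n) * sqrt (\<Sum>i<n. (residual i t)\<^sup>2)"
      by (rule sum_abs_le_sqrt_card_mult)
    also have "\<dots> \<le> sqrt (real n) * sqrt (2 * trajectory_loss t)"
      by (intro mult_left_mono real_sqrt_le_mono residual_sum_sq_le_loss) simp
    finally show "(\<Sum>i<n. \<bar>residual i t\<bar>) \<le> sqrt (real n) * sqrt (2 * trajectory_loss t)" .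
  qed (simp add: norm_d_nonneg)
  finally show ?thesis by simp
qed

theorem weight_displacement_bound:
  assumes "\<bar>a r\<bar> \<le> 1" "\<And>i. i < n \<Longrightarrow> norm_d d (x i) = 1" "0 \<le> T" "r < m"
  shows "norm_d d (\<lambda>j. W T r j - W0 r j)
           \<le> sqrt (real n) * sqrt (\<Sum>i<n. (f_nn m d a W0 (x i) - y i)\<^sup>2) / (sqrt (real m) * lam)"
proof -
  define G where "G = sqrt (real n) * sqrt (2 * trajectory_loss 0) / sqrt (real m)"
  have "norm_d d (\<lambda>j. W T r j - W0 r j) \<le> G / lam"
  proof (rule damped_flow_norm_bound[where g = "\<lambda>t. data_grad t r", OF \<open>0 \<le> T\<close> lam_pos])
    show "0 \<le> G" using initial_loss by (simp add: G_def sum_nonneg)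
    fix t assume t: "t \<in> {0<..<T}"
    show "((\<lambda>s. W s r j - W0 r j) has_real_derivative
            - data_grad t r j - lam * (W t r j - W0 r j)) (at t)" if "j < d" for j
      using displacement_has_derivative[of t r j] t that \<open>r < m\<close> by (simp add: grad_eq)
    have "\<bar>inner_d d (\<lambda>j. W T r j - W0 r j) (data_grad t r)\<bar>
        \<le> norm_d d (\<lambda>j. W T r j - W0 r j) *
             (sqrt (real n) * sqrt (2 * trajectory_loss t) / sqrt (real m))"
      by (rule abs_inner_data_grad_le[OF assms(1,2)])
    also have "\<dots> \<le> norm_d d (\<lambda>j. W T r j - W0 r j) * G"
      unfolding G_def using loss_nonincreasing[of t] t
      by (intro mult_left_mono divide_right_mono norm_d_nonneg) auto
    finally show "\<bar>inner_d d (\<lambda>j. W T r j - W0 r j) (data_grad t r)\<bar>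
        \<le> norm_d d (\<lambda>j. W T r j - W0 r j) * G" .
  qed (use W_initial W_continuous_on[OF \<open>r < m\<close>] \<open>r < m\<close> in \<open>auto intro: continuous_on_diff\<close>)
  thus ?thesis by (simp add: G_def initial_loss)
qed

corollary weight_displacement_bound_small_output:
  assumes "\<bar>a r\<bar> \<le> 1" "\<And>i. i < n \<Longrightarrow> norm_d d (x i) = 1" "\<And>i. i < n \<Longrightarrow> \<bar>y i\<bar> \<le> 1"
    and "(\<Sum>i<n. (f_nn m d a W0 (x i))\<^sup>2) < real n / \<delta>" "0 < \<delta>" "\<delta> \<le> 1" "0 \<le> T" "r < m"
  shows "norm_d d (\<lambda>j. W T r j - W0 r j) \<le> 2 * real n / (sqrt (\<delta> * real m) * lam)"
proof -
  have "norm_d d (\<lambda>j. W T r j - W0 r j)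
      \<le> sqrt (real n) * sqrt (\<Sum>i<n. (f_nn m d a W0 (x i) - y i)\<^sup>2) / (sqrt (real m) * lam)"
    using assms by (intro weight_displacement_bound) auto
  also have "\<dots> \<le> sqrt (real n) * sqrt (4 * real n / \<delta>) / (sqrt (real m) * lam)"
    using assms lam_pos
    by (intro divide_right_mono mult_left_mono real_sqrt_le_mono sum_square_diff_le) auto
  also have "sqrt (real n) * sqrt (4 * real n / \<delta>) = 2 * real n / sqrt \<delta>"
    by (simp add: real_sqrt_divide real_sqrt_mult)
  finally show ?thesis by (simp add: real_sqrt_mult)
qed

end

section \<open>The random initialisation\<close>

lemma
  fixes M :: "'i \<Rightarrow> 'a measure" and g :: "'i \<Rightarrow> 'a \<Rightarrow> real"
  assumes I: "finite I" and prob: "\<And>i. prob_space (M i)"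
    and int: "\<And>i. i \<in> I \<Longrightarrow> integrable (M i) (g i)"
    and int_sq: "\<And>i. i \<in> I \<Longrightarrow> integrable (M i) (\<lambda>x. (g i x)\<^sup>2)"
    and centered: "\<And>i. i \<in> I \<Longrightarrow> integral\<^sup>L (M i) (g i) = 0"
    and "i \<in> I" "j \<in> I"
  shows integrable_PiM_cross_term: "integrable (PiM I M) (\<lambda>\<omega>. g i (\<omega> i) * g j (\<omega> j))"
    and integral_PiM_cross_term: "integral\<^sup>L (PiM I M) (\<lambda>\<omega>. g i (\<omega> i) * g j (\<omega> j)) =
           (if i = j then integral\<^sup>L (M i) (\<lambda>x. (g i x)\<^sup>2) else 0)"
proof -
  interpret product_prob_space M I
    by (simp add: product_prob_space_def product_prob_space_axioms_def product_sigma_finite_def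
        prob prob_space_imp_sigma_finite)
  \<comment> \<open>The cross term is a product over all coordinates, so it factorises under the product
    measure and vanishes for \<open>i \<noteq> j\<close>.\<close>
  define f where "f k x = (if k = i then g i x else 1) * (if k = j then g j x else 1)" for k x
  have f_eq: "f k = (if k = i \<and> k = j then (\<lambda>x. (g i x)\<^sup>2) else if k = i then g i
                    else if k = j then g j else (\<lambda>_. 1))" for k
    by (auto simp: f_def fun_eq_iff power2_eq_square)
  have f_int: "integrable (M k) (f k)" for k
    unfolding f_eq using int int_sq \<open>i \<in> I\<close> \<open>j \<in> I\<close>
      finite_measure.integrable_const[OF prob_space.axioms(1)[OF prob]]
    by auto
  have cross: "(\<lambda>\<omega>. g i (\<omega> i) * g j (\<omega> j)) = (\<lambda>\<omega>. \<Prod>k\<in>I. f k (\<omega> k))"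
    using I \<open>i \<in> I\<close> \<open>j \<in> I\<close> by (simp add: f_def prod.distrib)
  show "integrable (PiM I M) (\<lambda>\<omega>. g i (\<omega> i) * g j (\<omega> j))"
    unfolding cross by (rule product_integrable_prod[OF I f_int])
  have "integral\<^sup>L (PiM I M) (\<lambda>\<omega>. g i (\<omega> i) * g j (\<omega> j)) = (\<Prod>k\<in>I. integral\<^sup>L (M k) (f k))"
    unfolding cross by (rule product_integral_prod[OF I f_int])
  also have "\<dots> = (if i = j then integral\<^sup>L (M i) (\<lambda>x. (g i x)\<^sup>2) else 0)"
  proof (cases "i = j")
    case True
    hence "(\<Prod>k\<in>I. integral\<^sup>L (M k) (f k)) = (\<Prod>k\<in>I. if k = i then integral\<^sup>L (M i) (\<lambda>x. (g i x)\<^sup>2) else 1)"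
      by (intro prod.cong refl) (auto simp: f_eq prob_space.prob_space[OF prob])
    thus ?thesis using I \<open>i \<in> I\<close> True by simp
  next
    case False
    hence "integral\<^sup>L (M i) (f i) = 0" using centered \<open>i \<in> I\<close> by (simp add: f_eq)
    thus ?thesis using I \<open>i \<in> I\<close> False by (auto simp: prod_zero_iff)
  qed
  finally show "integral\<^sup>L (PiM I M) (\<lambda>\<omega>. g i (\<omega> i) * g j (\<omega> j)) =
      (if i = j then integral\<^sup>L (M i) (\<lambda>x. (g i x)\<^sup>2) else 0)" .
qed

lemma
  fixes M :: "'i \<Rightarrow> 'a measure" and g :: "'i \<Rightarrow> 'a \<Rightarrow> real"
  assumes I: "finite I" and prob: "\<And>i. prob_space (M i)"
    and int: "\<And>i. i \<in> I \<Longrightarrow> integrable (M i) (g i)"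
    and int_sq: "\<And>i. i \<in> I \<Longrightarrow> integrable (M i) (\<lambda>x. (g i x)\<^sup>2)"
    and centered: "\<And>i. i \<in> I \<Longrightarrow> integral\<^sup>L (M i) (g i) = 0"
  shows integrable_square_sum_PiM: "integrable (PiM I M) (\<lambda>\<omega>. (\<Sum>i\<in>I. g i (\<omega> i))\<^sup>2)"
    and integral_square_sum_PiM:
      "integral\<^sup>L (PiM I M) (\<lambda>\<omega>. (\<Sum>i\<in>I. g i (\<omega> i))\<^sup>2) = (\<Sum>i\<in>I. integral\<^sup>L (M i) (\<lambda>x. (g i x)\<^sup>2))"
proof -
  note cross_int = integrable_PiM_cross_term[where I = I and M = M and g = g, OF I prob int int_sq centered]
  have square: "(\<Sum>i\<in>I. g i (\<omega> i))\<^sup>2 = (\<Sum>i\<in>I. \<Sum>j\<in>I. g i (\<omega> i) * g j (\<omega> j))" for \<omega>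
    by (simp add: power2_eq_square sum_product)
  show "integrable (PiM I M) (\<lambda>\<omega>. (\<Sum>i\<in>I. g i (\<omega> i))\<^sup>2)"
    unfolding square using cross_int by (intro Bochner_Integration.integrable_sum) auto
  show "integral\<^sup>L (PiM I M) (\<lambda>\<omega>. (\<Sum>i\<in>I. g i (\<omega> i))\<^sup>2) = (\<Sum>i\<in>I. integral\<^sup>L (M i) (\<lambda>x. (g i x)\<^sup>2))"
    unfolding square using cross_int I
    by (simp add: Bochner_Integration.integral_sum Bochner_Integration.integrable_sum
        integral_PiM_cross_term[where I = I and M = M and g = g, OF I prob int int_sq centered] cong: sum.cong)
qed

abbreviation gaussian :: "real \<Rightarrow> real measure" where
  "gaussian \<kappa> \<equiv> density lborel (normal_density 0 \<kappa>)"

abbreviation rademacher :: "real measure" where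
  "rademacher \<equiv> measure_pmf (pmf_of_set {-1, 1})"

lemma
  assumes "0 < \<kappa>"
  shows integrable_gaussian_scaled: "integrable (gaussian \<kappa>) (\<lambda>t. t * c)"
    and integrable_gaussian_scaled_sq: "integrable (gaussian \<kappa>) (\<lambda>t. (t * c)\<^sup>2)"
    and integral_gaussian_scaled: "integral\<^sup>L (gaussian \<kappa>) (\<lambda>t. t * c) = 0"
    and integral_gaussian_scaled_sq: "integral\<^sup>L (gaussian \<kappa>) (\<lambda>t. (t * c)\<^sup>2) = c\<^sup>2 * \<kappa>\<^sup>2"
proof -
  have "has_bochner_integral lborel (\<lambda>x. normal_density 0 \<kappa> x * x) 0"
    using normal_moment_odd[OF assms, of 0 0] by simp
  from has_bochner_integral_mult_right[OF this, of c]
  have first: "has_bochner_integral lborel (\<lambda>x. normal_density 0 \<kappa> x *\<^sub>R (x * c)) 0"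
    by (simp add: ac_simps)
  have "has_bochner_integral lborel (\<lambda>x. normal_density 0 \<kappa> x * x\<^sup>2) (\<kappa>\<^sup>2)"
    using normal_moment_even[OF assms, of 0 1] by simp
  from has_bochner_integral_mult_right[OF this, of "c\<^sup>2"]
  have second: "has_bochner_integral lborel (\<lambda>x. normal_density 0 \<kappa> x *\<^sub>R (x * c)\<^sup>2) (c\<^sup>2 * \<kappa>\<^sup>2)"
    by (simp add: ac_simps power_mult_distrib)
  show "integrable (gaussian \<kappa>) (\<lambda>t. t * c)" "integrable (gaussian \<kappa>) (\<lambda>t. (t * c)\<^sup>2)"
    using first second by (subst integrable_density; auto intro: integrable.intros)+
  show "integral\<^sup>L (gaussian \<kappa>) (\<lambda>t. t * c) = 0"
    by (subst integral_density) (use first in \<open>auto dest: has_bochner_integral_integral_eq\<close>)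
  show "integral\<^sup>L (gaussian \<kappa>) (\<lambda>t. (t * c)\<^sup>2) = c\<^sup>2 * \<kappa>\<^sup>2"
    by (subst integral_density) (use second in \<open>auto dest: has_bochner_integral_integral_eq\<close>)
qed

lemma
  fixes c :: "nat \<Rightarrow> real" and d :: nat
  assumes "0 < \<kappa>"
  shows integrable_square_gaussian_sum:
      "integrable (PiM {..<d} (\<lambda>_. gaussian \<kappa>)) (\<lambda>v. (\<Sum>j<d. v j * c j)\<^sup>2)"
    and integral_square_gaussian_sum:
      "integral\<^sup>L (PiM {..<d} (\<lambda>_. gaussian \<kappa>)) (\<lambda>v. (\<Sum>j<d. v j * c j)\<^sup>2) = \<kappa>\<^sup>2 * (\<Sum>j<d. (c j)\<^sup>2)"
proof -
  note moments = prob_space_normal_density[OF assms] integrable_gaussian_scaled[OF assms]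
    integrable_gaussian_scaled_sq[OF assms] integral_gaussian_scaled[OF assms]
  show "integrable (PiM {..<d} (\<lambda>_. gaussian \<kappa>)) (\<lambda>v. (\<Sum>j<d. v j * c j)\<^sup>2)"
    by (rule integrable_square_sum_PiM[where g = "\<lambda>j t. t * c j"]) (simp_all only: moments finite_lessThan)
  have "integral\<^sup>L (PiM {..<d} (\<lambda>_. gaussian \<kappa>)) (\<lambda>v. (\<Sum>j<d. v j * c j)\<^sup>2)
      = (\<Sum>j<d. integral\<^sup>L (gaussian \<kappa>) (\<lambda>t. (t * c j)\<^sup>2))"
    by (rule integral_square_sum_PiM[where g = "\<lambda>j t. t * c j"]) (simp_all only: moments finite_lessThan)
  also have "\<dots> = \<kappa>\<^sup>2 * (\<Sum>j<d. (c j)\<^sup>2)"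
    by (simp add: integral_gaussian_scaled_sq[OF assms] sum_distrib_left mult.commute)
  finally show "integral\<^sup>L (PiM {..<d} (\<lambda>_. gaussian \<kappa>)) (\<lambda>v. (\<Sum>j<d. v j * c j)\<^sup>2)
      = \<kappa>\<^sup>2 * (\<Sum>j<d. (c j)\<^sup>2)" .
qed

lemma
  shows integrable_rademacher_scaled: "integrable rademacher (\<lambda>t. t * c)"
    and integrable_rademacher_scaled_sq: "integrable rademacher (\<lambda>t. (t * c)\<^sup>2)"
    and integral_rademacher_scaled: "integral\<^sup>L rademacher (\<lambda>t. t * c) = 0"
    and integral_rademacher_scaled_sq: "integral\<^sup>L rademacher (\<lambda>t. (t * c)\<^sup>2) = c\<^sup>2"
  by (auto intro!: integrable_measure_pmf_finite simp: integral_pmf_of_set power_mult_distrib)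

lemma
  fixes c :: "nat \<Rightarrow> real" and m :: nat
  shows integrable_square_rademacher_sum:
      "integrable (PiM {..<m} (\<lambda>_. rademacher)) (\<lambda>a. (\<Sum>r<m. a r * c r)\<^sup>2)"
    and integral_square_rademacher_sum:
      "integral\<^sup>L (PiM {..<m} (\<lambda>_. rademacher)) (\<lambda>a. (\<Sum>r<m. a r * c r)\<^sup>2) = (\<Sum>r<m. (c r)\<^sup>2)"
proof -
  note moments = measure_pmf.prob_space_axioms integrable_rademacher_scaled
    integrable_rademacher_scaled_sq integral_rademacher_scaled
  show "integrable (PiM {..<m} (\<lambda>_. rademacher)) (\<lambda>a. (\<Sum>r<m. a r * c r)\<^sup>2)"
    by (rule integrable_square_sum_PiM[where g = "\<lambda>r t. t * c r"]) (simp_all only: moments finite_lessThan)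
  have "integral\<^sup>L (PiM {..<m} (\<lambda>_. rademacher)) (\<lambda>a. (\<Sum>r<m. a r * c r)\<^sup>2)
      = (\<Sum>r<m. integral\<^sup>L rademacher (\<lambda>t. (t * c r)\<^sup>2))"
    by (rule integral_square_sum_PiM[where g = "\<lambda>r t. t * c r"]) (simp_all only: moments finite_lessThan)
  thus "integral\<^sup>L (PiM {..<m} (\<lambda>_. rademacher)) (\<lambda>a. (\<Sum>r<m. a r * c r)\<^sup>2) = (\<Sum>r<m. (c r)\<^sup>2)"
    by (simp add: integral_rademacher_scaled_sq)
qed

abbreviation weight_init :: "nat \<Rightarrow> nat \<Rightarrow> real \<Rightarrow> (nat \<Rightarrow> nat \<Rightarrow> real) measure" where
  "weight_init d m \<kappa> \<equiv> PiM {..<m} (\<lambda>_. PiM {..<d} (\<lambda>_. gaussian \<kappa>))"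

abbreviation sign_init :: "nat \<Rightarrow> (nat \<Rightarrow> real) measure" where
  "sign_init m \<equiv> PiM {..<m} (\<lambda>_. rademacher)"

lemma init_measure_eq: "init_measure d m \<kappa> = weight_init d m \<kappa> \<Otimes>\<^sub>M sign_init m"
  by (simp add: init_measure_def)

lemma prob_space_weight_init: "0 < \<kappa> \<Longrightarrow> prob_space (weight_init d m \<kappa>)"
  by (intro prob_space_PiM prob_space_normal_density)

lemma prob_space_sign_init: "prob_space (sign_init m)"
  by (intro prob_space_PiM measure_pmf.prob_space_axioms)

lemma measurable_weight_coordinate [measurable]:
  assumes "r \<in> {..<m}" "j \<in> {..<d}"
  shows "(\<lambda>\<omega>. fst \<omega> r j) \<in> borel_measurable (weight_init d m \<kappa> \<Otimes>\<^sub>M sign_init m)"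
proof -
  have "(\<lambda>v. v j) \<in> borel_measurable (PiM {..<d} (\<lambda>_. gaussian \<kappa>))"
    using measurable_component_singleton[OF assms(2), of "\<lambda>_. gaussian \<kappa>"] by simp
  moreover have "(\<lambda>w. w r) \<in> measurable (weight_init d m \<kappa>) (PiM {..<d} (\<lambda>_. gaussian \<kappa>))"
    using assms(1) by (rule measurable_component_singleton)
  ultimately show ?thesis by (simp add: measurable_compose[OF measurable_compose[OF measurable_fst]])
qed

lemma measurable_sign_coordinate [measurable]:
  assumes "r \<in> {..<m}"
  shows "(\<lambda>\<omega>. snd \<omega> r) \<in> borel_measurable (weight_init d m \<kappa> \<Otimes>\<^sub>M sign_init m)"
proof -
  have coordinate: "(\<lambda>a. a r) \<in> measurable (sign_init m) rademacher"
    using assms by (rule measurable_component_singleton)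
  have identity: "(\<lambda>t. t) \<in> borel_measurable rademacher" by simp
  show ?thesis
    using measurable_compose[OF measurable_compose[OF measurable_snd[of "weight_init d m \<kappa>"] coordinate] identity]
    by (simp add: comp_def)
qed

lemma measurable_square_output [measurable]:
  "(\<lambda>\<omega>. \<Sum>i<n. (f_nn m d (snd \<omega>) (fst \<omega>) (x i))\<^sup>2) \<in> borel_measurable (weight_init d m \<kappa> \<Otimes>\<^sub>M sign_init m)"
  unfolding f_nn_def inner_d_def relu_def
  by (intro borel_measurable_sum borel_measurable_power borel_measurable_times borel_measurable_const
      borel_measurable_max measurable_weight_coordinate measurable_sign_coordinate) auto

lemma
  fixes h :: "'a \<Rightarrow> real"
  assumes "\<And>i. i \<in> I \<Longrightarrow> prob_space (M i)" "i \<in> I" "h \<in> borel_measurable (M i)"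
  shows integrable_PiM_component_iff: "integrable (PiM I M) (\<lambda>\<omega>. h (\<omega> i)) \<longleftrightarrow> integrable (M i) h"
    and integral_PiM_component: "integral\<^sup>L (PiM I M) (\<lambda>\<omega>. h (\<omega> i)) = integral\<^sup>L (M i) h"
proof -
  have comp: "(\<lambda>\<omega>. \<omega> i) \<in> measurable (PiM I M) (M i)"
    using assms(2) by (rule measurable_component_singleton)
  have distr: "distr (PiM I M) (M i) (\<lambda>\<omega>. \<omega> i) = M i"
    using assms(1,2) by (rule distr_PiM_component)
  show "integrable (PiM I M) (\<lambda>\<omega>. h (\<omega> i)) \<longleftrightarrow> integrable (M i) h"
    using integrable_distr_eq[OF comp assms(3)] unfolding distr by simp
  show "integral\<^sup>L (PiM I M) (\<lambda>\<omega>. h (\<omega> i)) = integral\<^sup>L (M i) h"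
    using integral_distr[OF comp assms(3)] unfolding distr by simp
qed

lemma
  assumes "0 < \<kappa>" "r < m"
  shows integrable_square_preactivation:
      "integrable (weight_init d m \<kappa>) (\<lambda>w. (inner_d d (w r) v)\<^sup>2)"
    and integral_square_preactivation:
      "integral\<^sup>L (weight_init d m \<kappa>) (\<lambda>w. (inner_d d (w r) v)\<^sup>2) = \<kappa>\<^sup>2 * (norm_d d v)\<^sup>2"
proof -
  have prob: "prob_space (PiM {..<d} (\<lambda>_. gaussian \<kappa>))"
    using assms(1) by (intro prob_space_PiM prob_space_normal_density)
  have meas: "(\<lambda>u. (\<Sum>j<d. u j * v j)\<^sup>2) \<in> borel_measurable (PiM {..<d} (\<lambda>_. gaussian \<kappa>))"
    by measurable
  note component = integrable_PiM_component_iff[where I = "{..<m}" and i = r, OF _ _ meas]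
    integral_PiM_component[where I = "{..<m}" and i = r, OF _ _ meas]
  show "integrable (weight_init d m \<kappa>) (\<lambda>w. (inner_d d (w r) v)\<^sup>2)"
    unfolding inner_d_def using component(1) prob assms integrable_square_gaussian_sum by auto
  show "integral\<^sup>L (weight_init d m \<kappa>) (\<lambda>w. (inner_d d (w r) v)\<^sup>2) = \<kappa>\<^sup>2 * (norm_d d v)\<^sup>2"
    unfolding inner_d_def using component(2) prob assms
    by (simp add: integral_square_gaussian_sum norm_d_def sum_nonneg)
qed

lemma nn_integral_sign_init_square_output:
  "(\<integral>\<^sup>+ a. ennreal (\<Sum>i<n. (f_nn m d a w (x i))\<^sup>2) \<partial>sign_init m)
     = ennreal (\<Sum>i<n. \<Sum>r<m. (relu (inner_d d (w r) (x i)))\<^sup>2 / real m)"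
proof -
  define c where "c i r = relu (inner_d d (w r) (x i)) / sqrt (real m)" for i r
  have f_nn_eq: "f_nn m d a w (x i) = (\<Sum>r<m. a r * c i r)" for a i
    by (simp add: f_nn_def c_def sum_distrib_left)
  have "integrable (sign_init m) (\<lambda>a. \<Sum>i<n. (\<Sum>r<m. a r * c i r)\<^sup>2)"
    by (intro Bochner_Integration.integrable_sum integrable_square_rademacher_sum)
  moreover have "integral\<^sup>L (sign_init m) (\<lambda>a. \<Sum>i<n. (\<Sum>r<m. a r * c i r)\<^sup>2) = (\<Sum>i<n. \<Sum>r<m. (c i r)\<^sup>2)"
    by (simp add: Bochner_Integration.integral_sum integrable_square_rademacher_sum
        integral_square_rademacher_sum)
  ultimately show ?thesis
    unfolding f_nn_eq by (simp add: nn_integral_eq_integral sum_nonneg c_def power_divide)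
qed

lemma nn_integral_square_output_le:
  assumes "0 < \<kappa>" and unit: "\<And>i. i < n \<Longrightarrow> norm_d d (x i) = 1"
  shows "(\<integral>\<^sup>+ \<omega>. ennreal (\<Sum>i<n. (f_nn m d (snd \<omega>) (fst \<omega>) (x i))\<^sup>2) \<partial>init_measure d m \<kappa>)
           \<le> ennreal (real n * \<kappa>\<^sup>2)"
proof -
  interpret S: prob_space "sign_init m" by (rule prob_space_sign_init)
  have "(\<integral>\<^sup>+ \<omega>. ennreal (\<Sum>i<n. (f_nn m d (snd \<omega>) (fst \<omega>) (x i))\<^sup>2) \<partial>init_measure d m \<kappa>)
      = (\<integral>\<^sup>+ w. \<integral>\<^sup>+ a. ennreal (\<Sum>i<n. (f_nn m d a w (x i))\<^sup>2) \<partial>sign_init m \<partial>weight_init d m \<kappa>)"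
    unfolding init_measure_eq by (subst S.nn_integral_fst[symmetric]) simp_all
  also have "\<dots> = (\<integral>\<^sup>+ w. ennreal (\<Sum>i<n. \<Sum>r<m. (relu (inner_d d (w r) (x i)))\<^sup>2 / real m)
                      \<partial>weight_init d m \<kappa>)"
    by (simp add: nn_integral_sign_init_square_output)
  also have "\<dots> \<le> (\<integral>\<^sup>+ w. ennreal (\<Sum>i<n. \<Sum>r<m. (inner_d d (w r) (x i))\<^sup>2 / real m) \<partial>weight_init d m \<kappa>)"
    by (intro nn_integral_mono ennreal_leI sum_mono divide_right_mono)
      (auto simp: relu_def max_def power2_eq_square)
  also have "\<dots> = ennreal (\<Sum>i<n. \<Sum>r<m. \<kappa>\<^sup>2 / real m)"
  proof -
    have int: "integrable (weight_init d m \<kappa>) (\<lambda>w. (inner_d d (w r) (x i))\<^sup>2 / real m)"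
      if "r < m" for i r
      using integrable_square_preactivation[OF assms(1) that] by simp
    have int_sum: "integrable (weight_init d m \<kappa>) (\<lambda>w. \<Sum>r<m. (inner_d d (w r) (x i))\<^sup>2 / real m)"
      for i using int by (intro Bochner_Integration.integrable_sum) auto
    have "integral\<^sup>L (weight_init d m \<kappa>) (\<lambda>w. \<Sum>i<n. \<Sum>r<m. (inner_d d (w r) (x i))\<^sup>2 / real m)
        = (\<Sum>i<n. integral\<^sup>L (weight_init d m \<kappa>) (\<lambda>w. \<Sum>r<m. (inner_d d (w r) (x i))\<^sup>2 / real m))"
      by (rule Bochner_Integration.integral_sum) (use int_sum in auto)
    also have "\<dots> = (\<Sum>i<n. \<Sum>r<m. integral\<^sup>L (weight_init d m \<kappa>) (\<lambda>w. (inner_d d (w r) (x i))\<^sup>2 / real m))"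
      by (intro sum.cong refl Bochner_Integration.integral_sum int) auto
    also have "\<dots> = (\<Sum>i<n. \<Sum>r<m. \<kappa>\<^sup>2 / real m)"
      using unit by (intro sum.cong refl) (simp add: integral_square_preactivation[OF assms(1)])
    finally have "integral\<^sup>L (weight_init d m \<kappa>) (\<lambda>w. \<Sum>i<n. \<Sum>r<m. (inner_d d (w r) (x i))\<^sup>2 / real m)
        = (\<Sum>i<n. \<Sum>r<m. \<kappa>\<^sup>2 / real m)" .
    moreover have "integrable (weight_init d m \<kappa>) (\<lambda>w. \<Sum>i<n. \<Sum>r<m. (inner_d d (w r) (x i))\<^sup>2 / real m)"
      by (rule Bochner_Integration.integrable_sum) (rule int_sum)
    ultimately show ?thesis by (simp add: nn_integral_eq_integral sum_nonneg)
  qed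
  also have "\<dots> \<le> ennreal (real n * \<kappa>\<^sup>2)"
    by (intro ennreal_leI) (cases "m = 0"; simp)
  finally show ?thesis .
qed

lemma AE_sign_init_bounded: "AE a in sign_init m. \<forall>r<m. \<bar>a r\<bar> \<le> 1"
proof -
  have "AE a in sign_init m. \<forall>r\<in>{..<m}. \<bar>a r\<bar> \<le> 1"
  proof (rule AE_finite_allI)
    fix r assume "r \<in> {..<m}"
    moreover have "AE t in rademacher. \<bar>t\<bar> \<le> 1" by (simp add: AE_measure_pmf_iff)
    ultimately show "AE a in sign_init m. \<bar>a r\<bar> \<le> 1"
      by (intro AE_PiM_component) (auto intro: measure_pmf.prob_space_axioms)
  qed simp
  thus ?thesis by (rule eventually_mono) simp
qed

lemma
  fixes n m d :: nat and x :: "nat \<Rightarrow> nat \<Rightarrow> real" and \<kappa> :: real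
  assumes "0 < \<kappa>" and unit: "\<And>i. i < n \<Longrightarrow> norm_d d (x i) = 1"
  defines "X \<equiv> \<lambda>\<omega>. \<Sum>i<n. (f_nn m d (snd \<omega>) (fst \<omega>) (x i))\<^sup>2"
  shows integrable_square_output: "integrable (weight_init d m \<kappa> \<Otimes>\<^sub>M sign_init m) X"
    and integral_square_output_le: "integral\<^sup>L (weight_init d m \<kappa> \<Otimes>\<^sub>M sign_init m) X \<le> real n * \<kappa>\<^sup>2"
proof -
  have X_meas: "X \<in> borel_measurable (weight_init d m \<kappa> \<Otimes>\<^sub>M sign_init m)"
    unfolding X_def by (rule measurable_square_output)
  have X_nonneg: "0 \<le> X \<omega>" for \<omega> by (simp add: X_def sum_nonneg)
  have nn: "(\<integral>\<^sup>+ \<omega>. ennreal (X \<omega>) \<partial>weight_init d m \<kappa> \<Otimes>\<^sub>M sign_init m) \<le> ennreal (real n * \<kappa>\<^sup>2)"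
    using nn_integral_square_output_le[OF assms(1) unit] by (simp add: X_def init_measure_eq)
  show "integrable (weight_init d m \<kappa> \<Otimes>\<^sub>M sign_init m) X"
    by (intro integrableI_nonneg X_meas AE_I2 X_nonneg le_less_trans[OF nn]) simp
  show "integral\<^sup>L (weight_init d m \<kappa> \<Otimes>\<^sub>M sign_init m) X \<le> real n * \<kappa>\<^sup>2"
    using integral_eq_nn_integral[OF X_meas] X_nonneg enn2real_mono[OF nn] by simp
qed

lemma small_output_event:
  fixes n m d :: nat and x :: "nat \<Rightarrow> nat \<Rightarrow> real" and \<kappa> \<delta> :: real
  assumes "0 < \<kappa>" "\<kappa> \<le> 1" "1 \<le> n" "0 < \<delta>" and unit: "\<And>i. i < n \<Longrightarrow> norm_d d (x i) = 1"
  defines "E \<equiv> {\<omega> \<in> space (init_measure d m \<kappa>).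
                 (\<Sum>i<n. (f_nn m d (snd \<omega>) (fst \<omega>) (x i))\<^sup>2) < real n / \<delta> \<and> (\<forall>r<m. \<bar>snd \<omega> r\<bar> \<le> 1)}"
  shows "E \<in> sets (init_measure d m \<kappa>)" and "1 - \<delta> \<le> measure (init_measure d m \<kappa>) E"
proof -
  interpret W: prob_space "weight_init d m \<kappa>" using assms(1) by (rule prob_space_weight_init)
  interpret S: prob_space "sign_init m" by (rule prob_space_sign_init)
  interpret P: pair_prob_space "weight_init d m \<kappa>" "sign_init m" ..
  let ?P = "weight_init d m \<kappa> \<Otimes>\<^sub>M sign_init m"
  define A where "A = {\<omega> \<in> space ?P. real n / \<delta> \<le> (\<Sum>i<n. (f_nn m d (snd \<omega>) (fst \<omega>) (x i))\<^sup>2)}"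
  define B where "B = {\<omega> \<in> space ?P. \<not> (\<forall>r<m. \<bar>snd \<omega> r\<bar> \<le> 1)}"
  have A_sets: "A \<in> sets ?P" unfolding A_def by measurable
  have B_sets: "B \<in> sets ?P" unfolding B_def by measurable
  have "measure ?P A \<le> (real n * \<kappa>\<^sup>2) / (real n / \<delta>)"
    unfolding A_def using assms(3,4)
    by (intro order_trans[OF integral_Markov_inequality_measure[OF integrable_square_output[OF assms(1) unit] A_sets]]
        divide_right_mono integral_square_output_le[OF assms(1) unit]) (auto simp: sum_nonneg)
  also have "\<dots> \<le> \<delta>"
    using assms(1-4) by (simp add: field_simps power_le_one mult_left_le)
  finally have "measure ?P A \<le> \<delta>" .
  moreover have "AE \<omega> in ?P. \<forall>r<m. \<bar>snd \<omega> r\<bar> \<le> 1"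
    by (intro P.AE_pair_measure) (simp_all add: AE_sign_init_bounded)
  hence "measure ?P B = 0"
    unfolding B_def using AE_iff_measurable[OF B_sets[unfolded B_def] refl]
    by (simp add: P.emeasure_eq_measure)
  ultimately have "measure ?P (A \<union> B) \<le> \<delta>"
    using measure_Un_le[OF A_sets B_sets] by simp
  moreover have "E = space ?P - (A \<union> B)"
    by (auto simp: E_def A_def B_def init_measure_eq not_le)
  ultimately show "E \<in> sets (init_measure d m \<kappa>)" "1 - \<delta> \<le> measure (init_measure d m \<kappa>) E"
    unfolding init_measure_eq using A_sets B_sets by (auto simp: P.prob_compl)
qed

theorem lemma1:
  shows "\<exists>C>0. \<forall>(n::nat) (m::nat) (d::nat) (x::nat \<Rightarrow> nat \<Rightarrow> real) (y::nat \<Rightarrow> real)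
            (\<kappa>::real) (lam::real) (\<delta>::real).
     1 \<le> n \<longrightarrow> 1 \<le> m \<longrightarrow>
     (\<forall>i<n. norm_d d (x i) = 1 \<and> \<bar>y i\<bar> \<le> 1) \<longrightarrow>
     0 < \<kappa> \<longrightarrow> \<kappa> \<le> 1 \<longrightarrow> 0 < lam \<longrightarrow> 0 < \<delta> \<longrightarrow> \<delta> < 1 \<longrightarrow>
     (\<exists>E \<in> sets (init_measure d m \<kappa>).
        measure (init_measure d m \<kappa>) E \<ge> 1 - \<delta> \<and>
        (\<forall>\<omega>\<in>E. \<forall>W. grad_flow n m d x y (snd \<omega>) lam (fst \<omega>) W \<longrightarrow>
           (\<forall>t\<ge>0. \<forall>r<m. norm_d d (\<lambda>j. W t r j - fst \<omega> r j)
                        \<le> C * real n / (sqrt (\<delta> * real m) * lam))))"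
proof (intro exI[of _ 2] conjI allI impI)
  fix n m d :: nat and x :: "nat \<Rightarrow> nat \<Rightarrow> real" and y :: "nat \<Rightarrow> real" and \<kappa> lam \<delta> :: real
  assume "1 \<le> n" "1 \<le> m" and data: "\<forall>i<n. norm_d d (x i) = 1 \<and> \<bar>y i\<bar> \<le> 1"
    and "0 < \<kappa>" "\<kappa> \<le> 1" "0 < lam" "0 < \<delta>" "\<delta> < 1"
  let ?E = "{\<omega> \<in> space (init_measure d m \<kappa>).
              (\<Sum>i<n. (f_nn m d (snd \<omega>) (fst \<omega>) (x i))\<^sup>2) < real n / \<delta> \<and> (\<forall>r<m. \<bar>snd \<omega> r\<bar> \<le> 1)}"
  have "?E \<in> sets (init_measure d m \<kappa>)" "1 - \<delta> \<le> measure (init_measure d m \<kappa>) ?E"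
    using small_output_event[of \<kappa> n \<delta> d x m] data \<open>0 < \<kappa>\<close> \<open>\<kappa> \<le> 1\<close> \<open>1 \<le> n\<close> \<open>0 < \<delta>\<close> by auto
  moreover have "norm_d d (\<lambda>j. W t r j - fst \<omega> r j) \<le> 2 * real n / (sqrt (\<delta> * real m) * lam)"
    if "\<omega> \<in> ?E" "grad_flow n m d x y (snd \<omega>) lam (fst \<omega>) W" "0 \<le> t" "r < m" for \<omega> W t r
  proof -
    interpret relu_gradient_flow n m d x y "snd \<omega>" lam "fst \<omega>" W
      using that(2) \<open>0 < lam\<close> by unfold_locales
    show ?thesis
      using that data \<open>0 < \<delta>\<close> \<open>\<delta> < 1\<close> by (intro weight_displacement_bound_small_output) auto
  qed
  ultimately show "\<exists>E \<in> sets (init_measure d m \<kappa>). measure (init_measure d m \<kappa>) E \<ge> 1 - \<delta> \<and>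
        (\<forall>\<omega>\<in>E. \<forall>W. grad_flow n m d x y (snd \<omega>) lam (fst \<omega>) W \<longrightarrow>
           (\<forall>t\<ge>0. \<forall>r<m. norm_d d (\<lambda>j. W t r j - fst \<omega> r j) \<le> 2 * real n / (sqrt (\<delta> * real m) * lam)))"
    by blast
qed simp

end
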